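(* Let $\alpha>0$ be an ordinal, let $X$ be a topological space, let $Y$ be a regular-$U(\alpha)$-space, let $S$ be a dense subset of $X$ and let $f:S\to Y$ be continuous. Then the following are equivalent: (1) $f$ has a continuous extension to $X$; (2) for every family $\{A_\beta\}$ of closed subsets of $Y$ with $\bigcap_\beta A_\beta=\emptyset$ one has $\bigcap_\beta\overline{f^{-1}(A_\beta)}=\emptyset$ (closures in $X$).
   Context: For a subset $A$ of a space $Z$ and an ordinal $\alpha>0$, an $\alpha$-hull of $A$ is an open set $U\supseteq A$ for which there exists a family $\{U_\beta\}_{\beta\le\alpha}$ of open sets containing $A$ with $\mathrm{cl}\,U_\beta\subseteq U_{\beta+1}$ whenever $\beta+1\le\alpha$ and $U=U_\alpha=\bigcup_{\beta\le\alpha}U_\beta$. $Z$ is a regular-$U(\alpha)$-space if for every point $x$ and closed set $F$ with $x\notin F$ there are an $\alpha$-hull $U_x$ of $x$ and an $\alpha$-hull $U_F$ of $F$ with $\overline{U_x}\cap\overline{U_F}=\emptyset$. *)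

theory Defs
  imports "HOL-Analysis.Analysis"
begin

text \<open>Ordinals are represented by elements of a well-ordered type 'o: the ordinal
  \<alpha> is identified with the order type of the initial segment {..\<alpha>}.\<close>

definition is_succ :: "'o::wellorder \<Rightarrow> 'o \<Rightarrow> bool" where
  "is_succ \<beta> \<gamma> \<longleftrightarrow> \<beta> < \<gamma> \<and> (\<forall>\<delta>. \<beta> < \<delta> \<longrightarrow> \<gamma> \<le> \<delta>)"

definition alpha_hull :: "'a topology \<Rightarrow> 'o::wellorder \<Rightarrow> 'a set \<Rightarrow> 'a set \<Rightarrow> bool" where
  "alpha_hull Z \<alpha> A U \<longleftrightarrow>
     openin Z U \<and> A \<subseteq> U \<and>
     (\<exists>V :: 'o \<Rightarrow> 'a set.
        (\<forall>\<beta>\<le>\<alpha>. openin Z (V \<beta>) \<and> A \<subseteq> V \<beta>) \<and>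
        (\<forall>\<beta> \<gamma>. is_succ \<beta> \<gamma> \<and> \<gamma> \<le> \<alpha> \<longrightarrow> Z closure_of (V \<beta>) \<subseteq> V \<gamma>) \<and>
        U = V \<alpha> \<and> U = (\<Union>\<beta>\<in>{..\<alpha>}. V \<beta>))"

definition regular_U_space :: "'o::wellorder \<Rightarrow> 'a topology \<Rightarrow> bool" where
  "regular_U_space \<alpha> Z \<longleftrightarrow>
     (\<forall>x F. x \<in> topspace Z \<and> closedin Z F \<and> x \<notin> F \<longrightarrow>
        (\<exists>Ux UF. alpha_hull Z \<alpha> {x} Ux \<and> alpha_hull Z \<alpha> F UF \<and>
                 Z closure_of Ux \<inter> Z closure_of UF = {}))"

end

theory Submission
  imports Defs
begin

text \<open>Only regularity of \<open>Y\<close> matters, and every regular-\<open>U(\<alpha>)\<close>-space is regular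
  (the hulls themselves separate a point from a closed set). Given condition (2) at a point \<open>x \<notin> S\<close>, the limit of \<open>f\<close> at \<open>x\<close> along
  \<open>S\<close> exists: otherwise every \<open>y\<close> has an open neighbourhood \<open>W\<^sub>y\<close> which \<open>f\<close> keeps leaving near
  \<open>x\<close>, so \<open>x\<close> lies in the closure of every \<open>f\<^sup>-\<^sup>1(Y - W\<^sub>y)\<close> although the closed sets
  \<open>Y - W\<^sub>y\<close> have empty intersection. For a regular codomain, existence of these limits
  at all points of the closure of \<open>S\<close> yields a continuous extension.\<close>

lemma regular_U_space_imp_regular_space:
  assumes "regular_U_space \<alpha> Y"
  shows "regular_space Y"
  unfolding regular_space_def
proof (intro allI impI)
  fix C y
  assume "closedin Y C \<and> y \<in> topspace Y - C"
  then obtain Uy UC where hulls: "alpha_hull Y \<alpha> {y} Uy" "alpha_hull Y \<alpha> C UC"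
    and disj: "Y closure_of Uy \<inter> Y closure_of UC = {}"
    using assms unfolding regular_U_space_def by blast
  have "openin Y Uy" "y \<in> Uy" "openin Y UC" "C \<subseteq> UC"
    using hulls unfolding alpha_hull_def by auto
  moreover have "Uy \<subseteq> Y closure_of Uy" "UC \<subseteq> Y closure_of UC"
    by (simp_all add: closure_of_subset openin_subset \<open>openin Y Uy\<close> \<open>openin Y UC\<close>)
  then have "disjnt Uy UC"
    using disj unfolding disjnt_def by blast
  ultimately show "\<exists>U V. openin Y U \<and> openin Y V \<and> y \<in> U \<and> C \<subseteq> V \<and> disjnt U V"
    by blast
qed

lemma continuous_extension_imp_closure_preimages_disjoint:
  assumes g: "continuous_map X Y g" and gf: "\<forall>x\<in>S. g x = f x"
    and closed: "\<forall>A\<in>\<A>. closedin Y A" and empty: "topspace Y \<inter> \<Inter>\<A> = {}"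
  shows "topspace X \<inter> (\<Inter>A\<in>\<A>. X closure_of {x\<in>S. f x \<in> A}) = {}"
proof -
  have "g x \<in> topspace Y \<inter> \<Inter>\<A>"
    if x: "x \<in> topspace X" "\<forall>A\<in>\<A>. x \<in> X closure_of {x\<in>S. f x \<in> A}" for x
  proof -
    have "g x \<in> A" if "A \<in> \<A>" for A
    proof -
      have "g x \<in> Y closure_of (g ` {x\<in>S. f x \<in> A})"
        using continuous_map_image_closure_subset[OF g] x(2) that by blast
      also have "\<dots> \<subseteq> Y closure_of A"
        using gf by (intro closure_of_mono) auto
      also have "\<dots> = A"
        using closed that by (simp add: closure_of_closedin)
      finally show ?thesis .
    qed
    moreover have "g x \<in> topspace Y"
      using continuous_map_image_subset_topspace[OF g] x(1) by blast
    ultimately show ?thesis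
      by blast
  qed
  then show ?thesis
    using empty by blast
qed

lemma limitin_atin_within_exists_if_closure_preimages_disjoint:
  assumes fS: "f ` S \<subseteq> topspace Y"
    and cond: "\<forall>\<A>. (\<forall>A\<in>\<A>. closedin Y A) \<and> topspace Y \<inter> \<Inter>\<A> = {} \<longrightarrow>
                   topspace X \<inter> (\<Inter>A\<in>\<A>. X closure_of {x\<in>S. f x \<in> A}) = {}"
    and t: "t \<in> topspace X" "t \<notin> S"
  shows "\<exists>l. limitin Y f l (atin_within X t S)"
proof (rule ccontr)
  assume "\<nexists>l. limitin Y f l (atin_within X t S)"
  then obtain W where W: "\<And>y. y \<in> topspace Y \<Longrightarrow> openin Y (W y) \<and> y \<in> W y \<and>
      \<not> (\<forall>\<^sub>F x in atin_within X t S. f x \<in> W y)"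
    unfolding limitin_def by metis
  define \<A> where "\<A> = (\<lambda>y. topspace Y - W y) ` topspace Y"
  have "t \<in> X closure_of {x\<in>S. f x \<in> A}" if A: "A \<in> \<A>" for A
  proof -
    obtain y where y: "y \<in> topspace Y" "A = topspace Y - W y"
      using A \<A>_def by blast
    have "\<exists>s\<in>T. s \<in> S \<and> f s \<notin> W y" if "openin X T" "t \<in> T" for T
      using W[OF y(1)] that t by (auto simp: eventually_atin_within)
    then show ?thesis
      using t(1) fS y(2) by (fastforce simp: in_closure_of)
  qed
  moreover have "topspace X \<inter> (\<Inter>A\<in>\<A>. X closure_of {x\<in>S. f x \<in> A}) = {}"
  proof (rule cond[rule_format, OF conjI])
    show "\<forall>A\<in>\<A>. closedin Y A" "topspace Y \<inter> \<Inter>\<A> = {}"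
      using W unfolding \<A>_def by blast+
  qed
  ultimately show False
    using t(1) by blast
qed

theorem theorem3p7:
  fixes \<alpha> :: "'o::wellorder"
    and X :: "'a topology" and Y :: "'b topology"
    and S :: "'a set" and f :: "'a \<Rightarrow> 'b"
  assumes "\<exists>\<beta>. \<beta> < \<alpha>"
    and "regular_U_space \<alpha> Y"
    and "S \<subseteq> topspace X" and "X closure_of S = topspace X"
    and "continuous_map (subtopology X S) Y f"
  shows "(\<exists>g. continuous_map X Y g \<and> (\<forall>x\<in>S. g x = f x)) \<longleftrightarrow>
         (\<forall>\<A>. (\<forall>A\<in>\<A>. closedin Y A) \<and> topspace Y \<inter> \<Inter>\<A> = {} \<longrightarrow>
               topspace X \<inter> (\<Inter>A\<in>\<A>. X closure_of {x\<in>S. f x \<in> A}) = {})"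
    (is "?extends \<longleftrightarrow> ?cond")
proof
  assume ?extends
  then obtain g where g: "continuous_map X Y g" "\<forall>x\<in>S. g x = f x"
    by blast
  show ?cond
    using continuous_extension_imp_closure_preimages_disjoint[OF g] by blast
next
  assume ?cond
  have fS: "f ` S \<subseteq> topspace Y"
    using continuous_map_image_subset_topspace[OF assms(5)] assms(3)
    by (simp add: Int_absorb1)
  have "\<exists>l. limitin Y f l (atin_within X t S)" if "t \<in> topspace X - S" for t
    using that by (intro limitin_atin_within_exists_if_closure_preimages_disjoint[OF fS \<open>?cond\<close>]) auto
  then obtain g where "continuous_map (subtopology X (topspace X)) Y g" "\<And>x. x \<in> S \<Longrightarrow> g x = f x"
    using continuous_map_extension_pointwise_alt[OF regular_U_space_imp_regular_space[OF assms(2)]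
        assms(3) _ assms(5)] assms(4)
    by blast
  then show ?extends
    by auto
qed

end
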